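(* Let $n\ge 2$, let $(\pi,w)$ and $(\sigma,u)$ be threshold pairs of size $n$, and let $G_1=T(\pi,w)$ and $G_2=T(\sigma,u)$. Then $G_1=G_2$ as labeled graphs if and only if both of the following hold: (a) $w_k=u_k$ for all $k\ge 2$; (b) for every $1\le i\le n$, letting $j$ be the position of $i$ in $\pi$ (i.e. $\pi_j=i$) and $k$ the position of $i$ in $\sigma$ (i.e. $\sigma_k=i$), either $1\in\{j,k\}$ and $w_\ell=w_{\max\{j,k\}}$ for all $1<\ell\le\max\{j,k\}$, or for every $\ell$ with $\min\{j,k\}\le\ell\le\max\{j,k\}$ we have $w_\ell=w_j=w_k$.
   Context: Let $\mathcal{S}_n$ be the set of permutations of $\{1,\dots,n\}$ in one-line notation $\pi=\pi_1\cdots\pi_n$. A threshold pair of size $n$ is a pair $(\pi,w)$ with $\pi\in\mathcal{S}_n$ and $w=w_1\cdots w_n\in\{+1,-1\}^n$. The labeled graph $T(\pi,w)$ on vertex set $\{1,\dots,n\}$ is defined as follows: $G_1$ is the graph with the single vertex $\pi_1$; for $2\le i\le n$, $G_i$ is obtained from $G_{i-1}$ by adding a new vertex $\pi_i$ which is adjacent to every vertex of $G_{i-1}$ if $w_i=+1$ and is isolated if $w_i=-1$; then $T(\pi,w)=G_n$. Two labeled graphs on $\{1,\dots,n\}$ are equal if they have the same edge set. *)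

theory Defs
  imports "HOL-Combinatorics.Permutations"
begin

text \<open>A permutation pi of {1..n} is given in one-line
notation as a function with pi permutes {1..n} (pi i is the i-th entry); a sign word
w is a function nat => int with w i in {1,-1} for 1 <= i <= n. A labeled graph is
represented by its edge set, a set of two-element vertex sets.
thr_step pi w i is the edge set of G_i: G_1 has no edges (G_0 is just the empty start),
and G_{i} arises from G_{i-1} by joining pi i to all pi j, j < i, iff w i = 1.\<close>

fun thr_step :: "(nat \<Rightarrow> nat) \<Rightarrow> (nat \<Rightarrow> int) \<Rightarrow> nat \<Rightarrow> nat set set" where
  "thr_step \<pi> w 0 = {}"
| "thr_step \<pi> w (Suc i) =
     (if w (Suc i) = 1
      then thr_step \<pi> w i \<union> {{\<pi> (Suc i), \<pi> j} | j. 1 \<le> j \<and> j \<le> i}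
      else thr_step \<pi> w i)"

definition threshold_graph :: "nat \<Rightarrow> (nat \<Rightarrow> nat) \<Rightarrow> (nat \<Rightarrow> int) \<Rightarrow> nat set set" where
  "threshold_graph n \<pi> w = thr_step \<pi> w n"

definition threshold_pair :: "nat \<Rightarrow> (nat \<Rightarrow> nat) \<Rightarrow> (nat \<Rightarrow> int) \<Rightarrow> bool" where
  "threshold_pair n \<pi> w \<longleftrightarrow> \<pi> permutes {1..n} \<and> (\<forall>i\<in>{1..n}. w i = 1 \<or> w i = -1)"

end

theory Submission
  imports Defs
begin

text \<open>
  Vertex \<open>\<pi> p\<close> of \<open>T(\<pi>, w)\<close> is adjacent to \<open>\<pi> q\<close> iff \<open>p \<noteq> q\<close> and \<open>w (max p q) = 1\<close>. So
  \<open>T(\<pi>, w)\<close> is the image under \<open>\<pi>\<close> of a graph on positions that only depends on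
  \<open>w\<^sub>2, \<dots>, w\<^sub>n\<close>, and \<open>T(\<pi>, w) = T(\<sigma>, u)\<close> says that moving every vertex from its
  position in \<open>\<pi>\<close> to its position in \<open>\<sigma>\<close> is an isomorphism between the position graphs of
  \<open>w\<close> and \<open>u\<close>. The number of vertices of degree at least \<open>t\<close> is an isomorphism invariant;
  taking for \<open>t\<close> the \<open>w\<close>-degree of the largest index \<open>k\<close> where \<open>w\<close> and \<open>u\<close> differ, it is
  smaller for \<open>u\<close> than for \<open>w\<close>, which gives (a). Neighbourhoods in a threshold graph are nested, so
  positions of equal degree are twins, and positions \<open>j < k\<close> are twins iff \<open>w\<close> is constant
  on \<open>[max 2 j, k]\<close>: condition (b) says exactly that every vertex occupies twin positions in
  \<open>\<pi>\<close> and \<open>\<sigma>\<close>. Conversely, exchanging positions for twins preserves adjacency.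
\<close>

definition thr_adj :: "(nat \<Rightarrow> int) \<Rightarrow> nat \<Rightarrow> nat \<Rightarrow> bool" where
  "thr_adj w p q \<longleftrightarrow> p \<noteq> q \<and> w (max p q) = 1"

definition thr_nbrs :: "nat \<Rightarrow> (nat \<Rightarrow> int) \<Rightarrow> nat \<Rightarrow> nat set" where
  "thr_nbrs n w p = {q \<in> {1..n}. thr_adj w p q}"

definition thr_deg_count :: "nat \<Rightarrow> (nat \<Rightarrow> int) \<Rightarrow> nat \<Rightarrow> nat" where
  "thr_deg_count n w t = card {p \<in> {1..n}. t \<le> card (thr_nbrs n w p)}"

text \<open>The sign \<open>w 1\<close> never matters, which is why position 1 is exempt here.\<close>

definition thr_twins :: "(nat \<Rightarrow> int) \<Rightarrow> nat \<Rightarrow> nat \<Rightarrow> bool" where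
  "thr_twins w j k \<longleftrightarrow> (\<forall>l. 2 \<le> l \<and> min j k \<le> l \<and> l \<le> max j k \<longrightarrow> w l = w (max j k))"

lemma thr_adj_commute: "thr_adj w p q \<longleftrightarrow> thr_adj w q p"
  by (auto simp: thr_adj_def max.commute)

lemma thr_twins_commute: "thr_twins w j k \<longleftrightarrow> thr_twins w k j"
  by (simp add: thr_twins_def min.commute max.commute)

lemma thr_adj_cong:
  assumes "\<forall>k\<in>{2..n}. w k = u k" and "p \<in> {1..n}" and "q \<in> {1..n}"
  shows "thr_adj w p q \<longleftrightarrow> thr_adj u p q"
  using assms by (auto simp: thr_adj_def max_def)

lemma thr_nbrs_cong:
  assumes "\<forall>k\<in>{2..n}. w k = u k" and "p \<in> {1..n}"
  shows "thr_nbrs n w p = thr_nbrs n u p"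
  using thr_adj_cong[OF assms] by (auto simp: thr_nbrs_def)

lemma thr_nbrs_eq_if_one:
  assumes "k \<le> n" and "w k = 1"
  shows "thr_nbrs n w k = {1..<k} \<union> {q \<in> {k<..n}. w q = 1}"
  using assms by (auto simp: thr_nbrs_def thr_adj_def max_def)

lemma card_thr_nbrs_less_below:
  assumes "2 \<le> k" and "k \<le> n" and agree: "\<forall>q\<in>{k<..n}. w q = u q"
    and "w k = 1" and "u k \<noteq> 1" and p: "p \<in> {1..k}"
  shows "card (thr_nbrs n u p) < card (thr_nbrs n w k)"
proof -
  define A where "A = {q \<in> {k<..n}. w q = 1}"
  have finA: "finite A"
    by (simp add: A_def)
  have "{1..<k} \<inter> A = {}"
    by (auto simp: A_def)
  then have deg_k: "card (thr_nbrs n w k) = (k - 1) + card A"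
    unfolding thr_nbrs_eq_if_one[of k n w, OF assms(2,4)] A_def[symmetric]
    by (simp add: card_Un_disjoint finA)
  show ?thesis
  proof (cases "p = k")
    case True
    then have "thr_nbrs n u p \<subseteq> A"
      using agree \<open>u k \<noteq> 1\<close> by (auto simp: thr_nbrs_def thr_adj_def A_def max_def)
    then have "card (thr_nbrs n u p) \<le> card A"
      by (rule card_mono[OF finA])
    then show ?thesis
      using deg_k \<open>2 \<le> k\<close> by linarith
  next
    case False
    have "thr_nbrs n u p \<subseteq> ({1..<k} - {p}) \<union> A"
    proof
      fix q assume "q \<in> thr_nbrs n u p"
      then have q: "q \<in> {1..n}" "q \<noteq> p" "u (max p q) = 1"
        by (auto simp: thr_nbrs_def thr_adj_def)
      moreover have "q \<noteq> k"
        using q p \<open>u k \<noteq> 1\<close> by (auto simp: max_def)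
      ultimately show "q \<in> ({1..<k} - {p}) \<union> A"
        using agree p by (cases "q < k") (auto simp: A_def max_def)
    qed
    then have "card (thr_nbrs n u p) \<le> card (({1..<k} - {p}) \<union> A)"
      using finA by (intro card_mono) auto
    also have "\<dots> \<le> card ({1..<k} - {p}) + card A"
      by (rule card_Un_le)
    also have "card ({1..<k} - {p}) = k - 2"
      using p False by simp
    finally show ?thesis
      using deg_k \<open>2 \<le> k\<close> by linarith
  qed
qed

lemma thr_deg_count_less:
  assumes "2 \<le> k" and "k \<le> n" and agree: "\<forall>q\<in>{k<..n}. w q = u q"
    and "w k = 1" and "u k \<noteq> 1"
  shows "thr_deg_count n u (card (thr_nbrs n w k)) < thr_deg_count n w (card (thr_nbrs n w k))"
proof -
  define t where "t = card (thr_nbrs n w k)"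
  have same_above: "thr_nbrs n u p = thr_nbrs n w p" if "k < p" "p \<le> n" for p
    using that agree by (auto simp: thr_nbrs_def thr_adj_def max_def)
  have "{p \<in> {1..n}. t \<le> card (thr_nbrs n u p)} \<subseteq> {p \<in> {1..n}. t \<le> card (thr_nbrs n w p)} - {k}"
  proof
    fix p assume p: "p \<in> {p \<in> {1..n}. t \<le> card (thr_nbrs n u p)}"
    then have "k < p"
      using card_thr_nbrs_less_below[OF assms, of p] by (fastforce simp: t_def)
    then show "p \<in> {p \<in> {1..n}. t \<le> card (thr_nbrs n w p)} - {k}"
      using p same_above[of p] by simp
  qed
  moreover have "k \<in> {p \<in> {1..n}. t \<le> card (thr_nbrs n w p)}"
    using assms by (simp add: t_def)
  ultimately show ?thesis
    unfolding thr_deg_count_def t_def[symmetric]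
    by (intro le_less_trans[OF card_mono card_Diff1_less]) auto
qed

lemma signs_eq_if_thr_deg_count_eq:
  assumes counts: "thr_deg_count n w = thr_deg_count n u"
    and signs: "\<forall>k\<in>{2..n}. w k = 1 \<or> w k = -1" "\<forall>k\<in>{2..n}. u k = 1 \<or> u k = -1"
  shows "\<forall>k\<in>{2..n}. w k = u k"
proof (rule ccontr)
  define K where "K = {k \<in> {2..n}. w k \<noteq> u k}"
  assume "\<not> (\<forall>k\<in>{2..n}. w k = u k)"
  then have "K \<noteq> {}"
    by (auto simp: K_def)
  moreover have "finite K"
    by (simp add: K_def)
  ultimately have "Max K \<in> K"
    by (rule Max_in[rotated])
  then have k: "2 \<le> Max K" "Max K \<le> n"
    by (auto simp: K_def)
  have above: "\<forall>q\<in>{Max K<..n}. w q = u q"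
  proof
    fix q assume q: "q \<in> {Max K<..n}"
    show "w q = u q"
    proof (rule ccontr)
      assume "w q \<noteq> u q"
      with q k have "q \<in> K"
        by (auto simp: K_def)
      with q show False
        using Max_ge[OF \<open>finite K\<close>] by fastforce
    qed
  qed
  consider "w (Max K) = 1" "u (Max K) \<noteq> 1" | "u (Max K) = 1" "w (Max K) \<noteq> 1"
    using \<open>Max K \<in> K\<close> signs(1)[rule_format, of "Max K"] signs(2)[rule_format, of "Max K"] k
    by (auto simp: K_def)
  then show False
  proof cases
    case 1
    show False
      using thr_deg_count_less[OF k above 1] counts by simp
  next
    case 2
    show False
      using thr_deg_count_less[of "Max K" n u w, OF k _ 2] above counts by simp
  qed
qed

lemma thr_nbrs_nested:
  "thr_nbrs n w j - {k} \<subseteq> thr_nbrs n w k - {j} \<or> thr_nbrs n w k - {j} \<subseteq> thr_nbrs n w j - {k}"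
proof -
  have "thr_nbrs n w j - {k} \<subseteq> thr_nbrs n w k - {j} \<or> thr_nbrs n w k - {j} \<subseteq> thr_nbrs n w j - {k}"
    if "j < k" for j k
    using that by (cases "w k = 1") (auto simp: thr_nbrs_def thr_adj_def max_def)
  then show ?thesis
    by (metis linorder_neqE_nat order_refl)
qed

lemma thr_nbrs_eq_if_card_eq:
  assumes "j \<in> {1..n}" and "k \<in> {1..n}" and "card (thr_nbrs n w j) = card (thr_nbrs n w k)"
  shows "thr_nbrs n w j - {k} = thr_nbrs n w k - {j}"
proof -
  have "k \<in> thr_nbrs n w j \<longleftrightarrow> j \<in> thr_nbrs n w k"
    using assms(1,2) by (auto simp: thr_nbrs_def thr_adj_commute)
  then have "card (thr_nbrs n w j - {k}) = card (thr_nbrs n w k - {j})"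
    using assms(3) by (simp add: card_Diff_singleton_if thr_nbrs_def)
  moreover have "finite (thr_nbrs n w j - {k})" "finite (thr_nbrs n w k - {j})"
    by (simp_all add: thr_nbrs_def)
  ultimately show ?thesis
    using thr_nbrs_nested[of n w j k] card_subset_eq by metis
qed

lemma thr_twins_if_nbrs_eq:
  assumes "j \<in> {1..n}" and "k \<in> {1..n}" and signs: "\<forall>l\<in>{2..n}. w l = 1 \<or> w l = -1"
    and nbrs: "thr_nbrs n w j - {k} = thr_nbrs n w k - {j}"
  shows "thr_twins w j k"
proof -
  have twins_if_less: "thr_twins w j k" if "j < k" "j \<in> {1..n}" "k \<in> {1..n}"
    and nbrs: "thr_nbrs n w j - {k} = thr_nbrs n w k - {j}" for j k
  proof -
    have "w l = w k" if l: "2 \<le> l" "j \<le> l" "l < k" for l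
    proof -
      \<comment> \<open>a position outside \<open>{j, k}\<close> whose adjacency to \<open>j\<close> is decided by \<open>w l\<close> and to \<open>k\<close> by \<open>w k\<close>\<close>
      define r where "r = (if l = j then 1 else l)"
      have "r \<in> thr_nbrs n w j - {k} \<longleftrightarrow> w l = 1" "r \<in> thr_nbrs n w k - {j} \<longleftrightarrow> w k = 1"
        using l \<open>j < k\<close> \<open>k \<in> {1..n}\<close> \<open>j \<in> {1..n}\<close> by (auto simp: r_def thr_nbrs_def thr_adj_def max_def)
      then have "w l = 1 \<longleftrightarrow> w k = 1"
        using nbrs by simp
      moreover have "l \<in> {2..n}" "k \<in> {2..n}"
        using l \<open>k \<in> {1..n}\<close> by auto
      ultimately show ?thesis
        using signs by (metis one_neq_neg_one)
    qed
    with \<open>j < k\<close> show ?thesis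
      by (auto simp: thr_twins_def le_less)
  qed
  show ?thesis
  proof (cases j k rule: linorder_cases)
    case less
    then show ?thesis
      using twins_if_less assms(1,2) nbrs by blast
  next
    case equal
    then show ?thesis
      by (auto simp: thr_twins_def)
  next
    case greater
    then show ?thesis
      using twins_if_less[of k j] assms(1,2) nbrs thr_twins_commute by blast
  qed
qed

lemma thr_adj_twin_left:
  assumes "thr_twins w a a'" and "1 \<le> a" "1 \<le> a'" "1 \<le> b" and "b \<noteq> a" "b \<noteq> a'"
  shows "thr_adj w a b \<longleftrightarrow> thr_adj w a' b"
proof (cases "b < max a a'")
  case True
  have run: "w l = w (max a a')" if "2 \<le> l" "min a a' \<le> l" "l \<le> max a a'" for l
    using assms(1) that unfolding thr_twins_def by blast
  have "w (max a b) = w (max a a')"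
    by (rule run) (use True assms(2-6) in \<open>auto simp: max_def min_def split: if_splits\<close>)
  moreover have "w (max a' b) = w (max a a')"
    by (rule run) (use True assms(2-6) in \<open>auto simp: max_def min_def split: if_splits\<close>)
  ultimately show ?thesis
    using assms by (simp add: thr_adj_def)
next
  case False
  then have "max a b = b" "max a' b = b"
    by auto
  then show ?thesis
    using assms by (simp add: thr_adj_def)
qed

lemma thr_adj_twins:
  assumes "thr_twins w a a'" "thr_twins w b b'" and "a \<noteq> b" "a' \<noteq> b'"
    and "1 \<le> a" "1 \<le> a'" "1 \<le> b" "1 \<le> b'"
  shows "thr_adj w a b \<longleftrightarrow> thr_adj w a' b'"
proof (cases "b = a'")
  case False
  have "thr_adj w a b \<longleftrightarrow> thr_adj w a' b"
    using thr_adj_twin_left[OF assms(1)] assms False by simp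
  also have "\<dots> \<longleftrightarrow> thr_adj w a' b'"
    using thr_adj_twin_left[OF assms(2)] assms False by (simp add: thr_adj_commute)
  finally show ?thesis .
next
  case True
  show ?thesis
  proof (cases "a = b'")
    case False
    have "thr_adj w a b \<longleftrightarrow> thr_adj w a b'"
      using thr_adj_twin_left[OF assms(2)] assms False by (simp add: thr_adj_commute)
    also have "\<dots> \<longleftrightarrow> thr_adj w a' b'"
      using thr_adj_twin_left[OF assms(1)] assms False by simp
    finally show ?thesis .
  qed (use True thr_adj_commute in blast)
qed

lemma permutes_inv_mem: "\<pi> permutes S \<Longrightarrow> x \<in> S \<Longrightarrow> inv \<pi> x \<in> S"
  by (simp add: permutes_in_image[OF permutes_inv])

lemma card_Collect_permutes:
  assumes "\<pi> permutes S"
  shows "card {x \<in> S. P (\<pi> x)} = card {x \<in> S. P x}"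
proof -
  have "\<pi> ` {x \<in> S. P (\<pi> x)} = {x \<in> S. P x}"
  proof
    show "{x \<in> S. P x} \<subseteq> \<pi> ` {x \<in> S. P (\<pi> x)}"
      using assms by (auto simp: permutes_inverses intro!: image_eqI[of _ \<pi> "inv \<pi> x" for x] permutes_inv_mem)
  qed (use assms in \<open>auto simp: permutes_in_image\<close>)
  then show ?thesis
    using card_image[OF permutes_inj_on[OF assms]] by metis
qed

lemma card_thr_nbrs_reindex:
  assumes P: "P permutes {1..n}" and S: "S permutes {1..n}"
    and adj: "\<forall>x\<in>{1..n}. \<forall>y\<in>{1..n}. thr_adj w (P x) (P y) \<longleftrightarrow> thr_adj u (S x) (S y)"
    and "x \<in> {1..n}"
  shows "card (thr_nbrs n w (P x)) = card (thr_nbrs n u (S x))"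
proof -
  have "card (thr_nbrs n w (P x)) = card {y \<in> {1..n}. thr_adj w (P x) (P y)}"
    unfolding thr_nbrs_def by (rule card_Collect_permutes[OF P, symmetric])
  also have "\<dots> = card {y \<in> {1..n}. thr_adj u (S x) (S y)}"
    using adj \<open>x \<in> {1..n}\<close> by (intro arg_cong[where f = card] Collect_cong) blast
  also have "\<dots> = card (thr_nbrs n u (S x))"
    unfolding thr_nbrs_def by (rule card_Collect_permutes[OF S])
  finally show ?thesis .
qed

lemma thr_deg_count_reindex:
  assumes P: "P permutes {1..n}" and S: "S permutes {1..n}"
    and adj: "\<forall>x\<in>{1..n}. \<forall>y\<in>{1..n}. thr_adj w (P x) (P y) \<longleftrightarrow> thr_adj u (S x) (S y)"
  shows "thr_deg_count n w = thr_deg_count n u"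
proof
  fix t
  have "thr_deg_count n w t = card {x \<in> {1..n}. t \<le> card (thr_nbrs n w (P x))}"
    unfolding thr_deg_count_def by (rule card_Collect_permutes[OF P, symmetric])
  also have "\<dots> = card {x \<in> {1..n}. t \<le> card (thr_nbrs n u (S x))}"
    using card_thr_nbrs_reindex[OF assms] by (intro arg_cong[where f = card] Collect_cong) auto
  also have "\<dots> = thr_deg_count n u t"
    unfolding thr_deg_count_def by (rule card_Collect_permutes[OF S])
  finally show "thr_deg_count n w t = thr_deg_count n u t" .
qed

lemma thr_adj_reindex_if_twins:
  assumes P: "P permutes {1..n}" and S: "S permutes {1..n}"
    and agree: "\<forall>k\<in>{2..n}. w k = u k" and twins: "\<forall>x\<in>{1..n}. thr_twins w (P x) (S x)"
    and x: "x \<in> {1..n}" and y: "y \<in> {1..n}"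
  shows "thr_adj w (P x) (P y) \<longleftrightarrow> thr_adj u (S x) (S y)"
proof (cases "x = y")
  case True
  then show ?thesis
    by (simp add: thr_adj_def)
next
  case False
  have range: "P x \<in> {1..n}" "S x \<in> {1..n}" "P y \<in> {1..n}" "S y \<in> {1..n}"
    using x y permutes_in_image[OF P] permutes_in_image[OF S] by blast+
  from False have "P x \<noteq> P y" "S x \<noteq> S y"
    using permutes_inj[OF P] permutes_inj[OF S] by (auto dest: injD)
  then have "thr_adj w (P x) (P y) \<longleftrightarrow> thr_adj w (S x) (S y)"
    using thr_adj_twins twins x y range by simp
  also have "\<dots> \<longleftrightarrow> thr_adj u (S x) (S y)"
    using thr_adj_cong[OF agree range(2,4)] .
  finally show ?thesis .
qed

lemma thr_adj_reindex_iff: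
  assumes P: "P permutes {1..n}" and S: "S permutes {1..n}"
    and signs: "\<forall>k\<in>{2..n}. w k = 1 \<or> w k = -1" "\<forall>k\<in>{2..n}. u k = 1 \<or> u k = -1"
  shows "(\<forall>x\<in>{1..n}. \<forall>y\<in>{1..n}. thr_adj w (P x) (P y) \<longleftrightarrow> thr_adj u (S x) (S y)) \<longleftrightarrow>
    (\<forall>k\<in>{2..n}. w k = u k) \<and> (\<forall>x\<in>{1..n}. thr_twins w (P x) (S x))"
proof
  assume adj: "\<forall>x\<in>{1..n}. \<forall>y\<in>{1..n}. thr_adj w (P x) (P y) \<longleftrightarrow> thr_adj u (S x) (S y)"
  have agree: "\<forall>k\<in>{2..n}. w k = u k"
    by (rule signs_eq_if_thr_deg_count_eq[OF thr_deg_count_reindex[OF P S adj] signs])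
  have "thr_twins w (P x) (S x)" if "x \<in> {1..n}" for x
  proof -
    have Px: "P x \<in> {1..n}" and Sx: "S x \<in> {1..n}"
      using that permutes_in_image[OF P] permutes_in_image[OF S] by blast+
    have "card (thr_nbrs n w (P x)) = card (thr_nbrs n w (S x))"
      using card_thr_nbrs_reindex[OF P S adj that] thr_nbrs_cong[OF agree Sx] by simp
    then show ?thesis
      by (intro thr_twins_if_nbrs_eq[OF Px Sx signs(1)] thr_nbrs_eq_if_card_eq[OF Px Sx])
  qed
  with agree show "(\<forall>k\<in>{2..n}. w k = u k) \<and> (\<forall>x\<in>{1..n}. thr_twins w (P x) (S x))"
    by blast
qed (use thr_adj_reindex_if_twins[OF P S] in blast)

lemma thr_step_eq:
  "thr_step \<pi> w i = {{\<pi> p, \<pi> q} | p q. 1 \<le> q \<and> q < p \<and> p \<le> i \<and> w p = 1}"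
proof (induction i)
  case 0
  then show ?case by simp
next
  case (Suc i)
  have "{{\<pi> p, \<pi> q} | p q. 1 \<le> q \<and> q < p \<and> p \<le> Suc i \<and> w p = 1} =
      {{\<pi> p, \<pi> q} | p q. 1 \<le> q \<and> q < p \<and> p \<le> i \<and> w p = 1} \<union>
      (if w (Suc i) = 1 then {{\<pi> (Suc i), \<pi> q} | q. 1 \<le> q \<and> q \<le> i} else {})"
    by (auto simp: le_Suc_eq less_Suc_eq_le) (metis less_Suc_eq_le)
  with Suc.IH show ?case by simp
qed

lemma threshold_graph_eq:
  "threshold_graph n \<pi> w = {{\<pi> p, \<pi> q} | p q. p \<in> {1..n} \<and> q \<in> {1..n} \<and> thr_adj w p q}"
proof -
  have "{\<pi> p, \<pi> q} \<in> threshold_graph n \<pi> w"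
    if "p \<in> {1..n}" "q \<in> {1..n}" "thr_adj w p q" for p q
    using that by (cases p q rule: linorder_cases)
      (auto simp: threshold_graph_def thr_step_eq thr_adj_def insert_commute max_def)
  then show ?thesis
    by (fastforce simp: threshold_graph_def thr_step_eq thr_adj_def)
qed

lemma threshold_graph_edge_iff:
  assumes "\<pi> permutes {1..n}" and "x \<in> {1..n}" and "y \<in> {1..n}"
  shows "{x, y} \<in> threshold_graph n \<pi> w \<longleftrightarrow> thr_adj w (inv \<pi> x) (inv \<pi> y)"
proof
  assume "{x, y} \<in> threshold_graph n \<pi> w"
  then obtain p q where pq: "{x, y} = {\<pi> p, \<pi> q}" and "thr_adj w p q"
    unfolding threshold_graph_eq by blast
  moreover have "inv \<pi> (\<pi> p) = p" "inv \<pi> (\<pi> q) = q"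
    using permutes_inverses(2)[OF assms(1)] by simp_all
  ultimately show "thr_adj w (inv \<pi> x) (inv \<pi> y)"
    using pq thr_adj_commute[of w p q] by (auto simp: doubleton_eq_iff)
next
  assume "thr_adj w (inv \<pi> x) (inv \<pi> y)"
  moreover have "inv \<pi> x \<in> {1..n}" "inv \<pi> y \<in> {1..n}"
    using permutes_inv_mem[OF assms(1) assms(2)] permutes_inv_mem[OF assms(1) assms(3)] .
  moreover have "{x, y} = {\<pi> (inv \<pi> x), \<pi> (inv \<pi> y)}"
    using permutes_inverses(1)[OF assms(1)] by simp
  ultimately show "{x, y} \<in> threshold_graph n \<pi> w"
    unfolding threshold_graph_eq by blast
qed

lemma threshold_graph_edge_cases:
  assumes "\<pi> permutes {1..n}" and "e \<in> threshold_graph n \<pi> w"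
  obtains x y where "x \<in> {1..n}" "y \<in> {1..n}" "e = {x, y}"
proof -
  from assms(2) obtain p q where "p \<in> {1..n}" "q \<in> {1..n}" "e = {\<pi> p, \<pi> q}"
    unfolding threshold_graph_eq by blast
  then show thesis
    using that permutes_in_image[OF assms(1)] by blast
qed

lemma threshold_graph_eq_iff:
  assumes "\<pi> permutes {1..n}" and "\<sigma> permutes {1..n}"
  shows "threshold_graph n \<pi> w = threshold_graph n \<sigma> u \<longleftrightarrow>
    (\<forall>x\<in>{1..n}. \<forall>y\<in>{1..n}. thr_adj w (inv \<pi> x) (inv \<pi> y) \<longleftrightarrow> thr_adj u (inv \<sigma> x) (inv \<sigma> y))"
    (is "?G = ?H \<longleftrightarrow> ?adj")
proof
  assume "?G = ?H"
  then show ?adj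
    by (simp add: threshold_graph_edge_iff[OF assms(1), symmetric]
        threshold_graph_edge_iff[OF assms(2), symmetric] del: atLeastAtMost_iff)
next
  assume adj: ?adj
  have "e \<in> ?G \<longleftrightarrow> e \<in> ?H" if "e \<in> ?G \<union> ?H" for e
  proof -
    obtain x y where "x \<in> {1..n}" "y \<in> {1..n}" and e: "e = {x, y}"
    proof (cases "e \<in> ?G")
      case True
      then show ?thesis using threshold_graph_edge_cases[OF assms(1)] that by blast
    next
      case False
      then show ?thesis using threshold_graph_edge_cases[OF assms(2)] that \<open>e \<in> ?G \<union> ?H\<close> by blast
    qed
    then show ?thesis
      using adj by (simp add: threshold_graph_edge_iff[OF assms(1)] threshold_graph_edge_iff[OF assms(2)]
          del: atLeastAtMost_iff)
  qed
  then show "?G = ?H"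
    by blast
qed

lemma thr_twins_iff:
  assumes "1 \<le> j" and "1 \<le> k"
  shows "thr_twins w j k \<longleftrightarrow>
    (1 \<in> {j, k} \<and> (\<forall>l. 1 < l \<and> l \<le> max j k \<longrightarrow> w l = w (max j k))) \<or>
    (\<forall>l. min j k \<le> l \<and> l \<le> max j k \<longrightarrow> w l = w j \<and> w j = w k)"
    (is "_ \<longleftrightarrow> ?first \<or> ?run")
proof
  assume twins: "thr_twins w j k"
  have run: "w l = w (max j k)" if "2 \<le> l" "min j k \<le> l" "l \<le> max j k" for l
    using twins that unfolding thr_twins_def by blast
  show "?first \<or> ?run"
  proof (cases "1 \<in> {j, k}")
    case True
    then have "min j k \<le> l" "2 \<le> l" if "1 < l" for l
      using assms that by auto
    then show ?thesis
      using True run by blast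
  next
    case False
    then have "2 \<le> j" "2 \<le> k"
      using assms by auto
    then have "2 \<le> l" if "min j k \<le> l" for l
      using that by linarith
    then have "w l = w (max j k)" if "min j k \<le> l" "l \<le> max j k" for l
      using run that by blast
    moreover have "min j k \<le> j" "j \<le> max j k" "min j k \<le> k" "k \<le> max j k"
      by auto
    ultimately show ?thesis
      by metis
  qed
next
  assume "?first \<or> ?run"
  then show "thr_twins w j k"
    unfolding thr_twins_def
  proof (elim disjE conjE; intro allI impI)
    fix l assume "\<forall>l. 1 < l \<and> l \<le> max j k \<longrightarrow> w l = w (max j k)" "2 \<le> l \<and> min j k \<le> l \<and> l \<le> max j k"
    moreover have "1 < l"
      using \<open>2 \<le> l \<and> min j k \<le> l \<and> l \<le> max j k\<close> by simp
    ultimately show "w l = w (max j k)"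
      by blast
  next
    fix l assume run: ?run and l: "2 \<le> l \<and> min j k \<le> l \<and> l \<le> max j k"
    have "w (max j k) = w j"
      using run[rule_format, of "max j k"] by simp
    then show "w l = w (max j k)"
      using run[rule_format, of l] l by simp
  qed
qed

lemma thr_twins_inv_iff:
  assumes \<pi>: "\<pi> permutes {1..n}" and \<sigma>: "\<sigma> permutes {1..n}" and i: "i \<in> {1..n}"
  shows "thr_twins w (inv \<pi> i) (inv \<sigma> i) \<longleftrightarrow>
    (\<forall>j k. 1 \<le> j \<and> j \<le> n \<and> 1 \<le> k \<and> k \<le> n \<and> \<pi> j = i \<and> \<sigma> k = i \<longrightarrow>
      (1 \<in> {j, k} \<and> (\<forall>l. 1 < l \<and> l \<le> max j k \<longrightarrow> w l = w (max j k))) \<or>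
      (\<forall>l. min j k \<le> l \<and> l \<le> max j k \<longrightarrow> w l = w j \<and> w j = w k))"
proof -
  have "\<pi> j = i \<longleftrightarrow> j = inv \<pi> i" "\<sigma> k = i \<longleftrightarrow> k = inv \<sigma> i" for j k
    using permutes_inv_eq[OF \<pi>] permutes_inv_eq[OF \<sigma>] by metis+
  moreover have "inv \<pi> i \<in> {1..n}" "inv \<sigma> i \<in> {1..n}"
    using permutes_inv_mem[OF \<pi> i] permutes_inv_mem[OF \<sigma> i] .
  ultimately show ?thesis
    using thr_twins_iff[of "inv \<pi> i" "inv \<sigma> i" w] by auto
qed

theorem lemma3:
  fixes n :: nat and \<pi> \<sigma> :: "nat \<Rightarrow> nat" and w u :: "nat \<Rightarrow> int"
  assumes "n \<ge> 2"
    and "threshold_pair n \<pi> w"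
    and "threshold_pair n \<sigma> u"
  shows "threshold_graph n \<pi> w = threshold_graph n \<sigma> u \<longleftrightarrow>
    ((\<forall>k. 2 \<le> k \<and> k \<le> n \<longrightarrow> w k = u k) \<and>
     (\<forall>i\<in>{1..n}. \<forall>j k. 1 \<le> j \<and> j \<le> n \<and> 1 \<le> k \<and> k \<le> n \<and> \<pi> j = i \<and> \<sigma> k = i \<longrightarrow>
        ((1 \<in> {j, k} \<and> (\<forall>l. 1 < l \<and> l \<le> max j k \<longrightarrow> w l = w (max j k))) \<or>
         (\<forall>l. min j k \<le> l \<and> l \<le> max j k \<longrightarrow> w l = w j \<and> w j = w k))))"
proof -
  have \<pi>: "\<pi> permutes {1..n}" and \<sigma>: "\<sigma> permutes {1..n}"
    and signs: "\<forall>k\<in>{2..n}. w k = 1 \<or> w k = -1" "\<forall>k\<in>{2..n}. u k = 1 \<or> u k = -1"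
    using assms(2,3) by (auto simp: threshold_pair_def)
  show ?thesis
    unfolding threshold_graph_eq_iff[OF \<pi> \<sigma>]
      thr_adj_reindex_iff[OF permutes_inv[OF \<pi>] permutes_inv[OF \<sigma>] signs]
    by (simp add: thr_twins_inv_iff[OF \<pi> \<sigma>] Ball_def)
qed

end
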